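(* Let $\mathcal{G}=(\mathcal{V},\mathcal{E},\mathcal{W})$ be a directed graph with nonnegative edge weights $w_{(x,y)}$ (with $w_{(x,y)}=0$ when $(x,y)\notin\mathcal{E}$). Let $d(x)=\sum_{y\in\operatorname{Nei}(x)} w_{(x,y)}$ be the generalized out-degree and $N^{in}(y)=\{x : w_{(x,y)}>0\}$ the in-neighbors. Fix $\alpha\in(0,1)$, $\epsilon>0$ and a source node $s\in\mathcal{V}$. Suppose vectors $p_s,r_s\in\mathbb{R}^{\mathcal{V}}$ satisfy the invariant $$p_s(i)+\alpha r_s(i)=(1-\alpha)\sum_{x\in N^{in}(i)}\frac{w_{(x,i)}\,p_s(x)}{d(x)}+\alpha\,1_{i=s}\qquad\text{for all } i\in\mathcal{V}.\qquad (\ast)$$ Consider an edge event $(u,v,\Delta w_{(u,v)})$ with $\Delta w_{(u,v)}\in\mathbb{R}$, transforming $\mathcal{G}$ into $\mathcal{G}'$ with weights $w'_{(u,v)}=w_{(u,v)}+\Delta w_{(u,v)}\ge 0$ and all other weights unchanged, so that $d'(u)=d(u)+\Delta w_{(u,v)}$; assume $d(u)>0$ and $d'(u)>0$. Define $p_s',r_s'$ to agree with $p_s,r_s$ except $$p'_s(u)=p_s(u)\,\frac{d(u)+\Delta w_{(u,v)}}{d(u)},\qquad r'_s(u)=r_s(u)-\frac{\Delta w_{(u,v)}\,p_s(u)}{\alpha\, d(u)},\qquad r'_s(v)=r_s(v)+\frac{1-\alpha}{\alpha}\,\frac{\Delta w_{(u,v)}\,p_s(u)}{d(u)}$$ (all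 right-hand sides computed from the values before the event; if $u=v$ both residual updates are applied to $r_s(u)$). Then $p'_s,r'_s$ satisfy the invariant $(\ast)$ with respect to $\mathcal{G}'$ (i.e., with $w',d'$ in place of $w,d$). Consequently, applying these rules successively to each event of a sequence of edge events (each time with respect to the current graph) and then running the weighted forward push procedure on the final graph yields vectors $p_s,r_s$ that satisfy $(\ast)$ with respect to the final graph and, upon termination, satisfy $|r_s(i)|\le\epsilon\, d(i)$ for all $i$, so that $p_s$ approximates the Personalized PageRank vector of $s$.
   Context: Weighted forward push procedure (input $p_s,r_s$, graph, $\epsilon,\alpha$): while there exists a node $x$ with $|r_s(x)|>\epsilon d(x)$, perform $\textsc{Push}(x)$: set $p_s(x)\mathrel{+}=\alpha r_s(x)$; for each out-neighbor $y$ of $x$, set $r_s(y)\mathrel{+}=(1-\alpha)r_s(x)w_{(x,y)}/d(x)$; then set $r_s(x)=0$. The Personalized PageRank vector of $s$ is $\pi_s=(1-\alpha)(D^{-1}A)^\top\pi_s+\alpha 1_s$, where $A(x,y)=w_{(x,y)}$ and $D=\operatorname{diag}(d)$; $1_s$ is the indicator vector of $s$ and $1_{i=s}$ is $1$ if $i=s$ and $0$ otherwise. *)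

theory Defs
  imports "HOL-Analysis.Analysis"
begin

text \<open>Weighted directed graph on a finite vertex set V, weights w x y (w x y = 0 means no edge).\<close>

definition wgraph :: "'a set \<Rightarrow> ('a \<Rightarrow> 'a \<Rightarrow> real) \<Rightarrow> bool" where
  "wgraph V w \<longleftrightarrow> finite V \<and> (\<forall>x y. 0 \<le> w x y) \<and> (\<forall>x y. (x \<notin> V \<or> y \<notin> V) \<longrightarrow> w x y = 0)"

definition deg :: "'a set \<Rightarrow> ('a \<Rightarrow> 'a \<Rightarrow> real) \<Rightarrow> 'a \<Rightarrow> real" where
  "deg V w x = (\<Sum>y\<in>V. w x y)"

definition in_nei :: "'a set \<Rightarrow> ('a \<Rightarrow> 'a \<Rightarrow> real) \<Rightarrow> 'a \<Rightarrow> 'a set" where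
  "in_nei V w i = {x \<in> V. 0 < w x i}"

definition ppr_invariant ::
  "'a set \<Rightarrow> ('a \<Rightarrow> 'a \<Rightarrow> real) \<Rightarrow> real \<Rightarrow> 'a \<Rightarrow> ('a \<Rightarrow> real) \<Rightarrow> ('a \<Rightarrow> real) \<Rightarrow> bool" where
  "ppr_invariant V w \<alpha> s p r \<longleftrightarrow>
     (\<forall>i\<in>V. p i + \<alpha> * r i =
        (1 - \<alpha>) * (\<Sum>x\<in>in_nei V w i. w x i * p x / deg V w x) + \<alpha> * (if i = s then 1 else 0))"

definition event_w :: "('a \<Rightarrow> 'a \<Rightarrow> real) \<Rightarrow> 'a \<Rightarrow> 'a \<Rightarrow> real \<Rightarrow> ('a \<Rightarrow> 'a \<Rightarrow> real)" where
  "event_w w u v dw = w(u := (w u)(v := w u v + dw))"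

definition event_p :: "'a set \<Rightarrow> ('a \<Rightarrow> 'a \<Rightarrow> real) \<Rightarrow> ('a \<Rightarrow> real) \<Rightarrow> 'a \<Rightarrow> real \<Rightarrow> ('a \<Rightarrow> real)" where
  "event_p V w p u dw = p(u := p u * (deg V w u + dw) / deg V w u)"

definition event_r ::
  "'a set \<Rightarrow> ('a \<Rightarrow> 'a \<Rightarrow> real) \<Rightarrow> real \<Rightarrow> ('a \<Rightarrow> real) \<Rightarrow> ('a \<Rightarrow> real) \<Rightarrow> 'a \<Rightarrow> 'a \<Rightarrow> real \<Rightarrow> ('a \<Rightarrow> real)" where
  "event_r V w \<alpha> p r u v dw = (\<lambda>i. r i
      - (if i = u then dw * p u / (\<alpha> * deg V w u) else 0)
      + (if i = v then (1 - \<alpha>) / \<alpha> * (dw * p u / deg V w u) else 0))"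

definition event_ok :: "'a set \<Rightarrow> ('a \<Rightarrow> 'a \<Rightarrow> real) \<Rightarrow> 'a \<Rightarrow> 'a \<Rightarrow> real \<Rightarrow> bool" where
  "event_ok V w u v dw \<longleftrightarrow> u \<in> V \<and> v \<in> V \<and> 0 \<le> w u v + dw \<and> 0 < deg V w u \<and> 0 < deg V w u + dw"

type_synonym 'a state = "('a \<Rightarrow> 'a \<Rightarrow> real) \<times> ('a \<Rightarrow> real) \<times> ('a \<Rightarrow> real)"

definition apply_event :: "'a set \<Rightarrow> real \<Rightarrow> 'a state \<Rightarrow> ('a \<times> 'a \<times> real) \<Rightarrow> 'a state" where
  "apply_event V \<alpha> st e = (case st of (w, p, r) \<Rightarrow> case e of (u, v, dw) \<Rightarrow>
      (event_w w u v dw, event_p V w p u dw, event_r V w \<alpha> p r u v dw))"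

fun events_ok :: "'a set \<Rightarrow> real \<Rightarrow> 'a state \<Rightarrow> ('a \<times> 'a \<times> real) list \<Rightarrow> bool" where
  "events_ok V \<alpha> st [] = True"
| "events_ok V \<alpha> st (e # es) =
     ((case st of (w, p, r) \<Rightarrow> case e of (u, v, dw) \<Rightarrow> event_ok V w u v dw)
      \<and> events_ok V \<alpha> (apply_event V \<alpha> st e) es)"

definition run_events :: "'a set \<Rightarrow> real \<Rightarrow> 'a state \<Rightarrow> ('a \<times> 'a \<times> real) list \<Rightarrow> 'a state" where
  "run_events V \<alpha> st es = foldl (apply_event V \<alpha>) st es"

text \<open>Push(x): p(x) += alpha r(x); r(x) := 0; r(y) += (1-alpha) r(x) w(x,y)/d(x) for every
  out-neighbour y (all with the old value r(x); a self-loop contribution is kept).\<close>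
definition push :: "'a set \<Rightarrow> ('a \<Rightarrow> 'a \<Rightarrow> real) \<Rightarrow> real \<Rightarrow> ('a \<Rightarrow> real) \<times> ('a \<Rightarrow> real) \<Rightarrow> 'a
                    \<Rightarrow> ('a \<Rightarrow> real) \<times> ('a \<Rightarrow> real)" where
  "push V w \<alpha> pr x = (case pr of (p, r) \<Rightarrow>
     (p(x := p x + \<alpha> * r x),
      \<lambda>y. (if y = x then 0 else r y) + (1 - \<alpha>) * r x * w x y / deg V w x))"

definition push_step :: "'a set \<Rightarrow> ('a \<Rightarrow> 'a \<Rightarrow> real) \<Rightarrow> real \<Rightarrow> real
      \<Rightarrow> ('a \<Rightarrow> real) \<times> ('a \<Rightarrow> real) \<Rightarrow> ('a \<Rightarrow> real) \<times> ('a \<Rightarrow> real) \<Rightarrow> bool" where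
  "push_step V w \<alpha> \<epsilon> pr pr' \<longleftrightarrow>
     (\<exists>x\<in>V. \<bar>snd pr x\<bar> > \<epsilon> * deg V w x \<and> pr' = push V w \<alpha> pr x)"

definition push_terminated :: "'a set \<Rightarrow> ('a \<Rightarrow> 'a \<Rightarrow> real) \<Rightarrow> real \<Rightarrow> ('a \<Rightarrow> real) \<Rightarrow> bool" where
  "push_terminated V w \<epsilon> r \<longleftrightarrow> \<not> (\<exists>x\<in>V. \<bar>r x\<bar> > \<epsilon> * deg V w x)"

end

theory Submission
  imports Defs
begin

text \<open>
  Write \<open>inflow p i = \<Sum>\<^sub>x w(x,i) p(x) / d(x)\<close> for the mass that \<open>p\<close> propagates into \<open>i\<close>, so that
  the invariant reads \<open>p + \<alpha> r = (1 - \<alpha>) inflow p + \<alpha> 1\<^sub>s\<close>.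
  An edge event rescales \<open>p(u)\<close> by \<open>d'(u) / d(u)\<close>, which leaves the ratio \<open>p(u) / d(u)\<close> unchanged;
  hence \<open>inflow\<close> changes only at \<open>v\<close>, by \<open>\<Delta>w p(u) / d(u)\<close>, and the two residual updates absorb
  exactly this change and the change of \<open>p(u)\<close>.
  A push at \<open>x\<close> moves \<open>\<alpha> r(x)\<close> into \<open>p(x)\<close>, which raises \<open>inflow\<close> at each \<open>y\<close> by
  \<open>\<alpha> r(x) w(x,y) / d(x)\<close>, and this is what the residuals of the out-neighbours receive.
  So the invariant survives every event and every push, and at termination the residual bound
  is the negated loop condition.
\<close>

definition inflow :: "'a set \<Rightarrow> ('a \<Rightarrow> 'a \<Rightarrow> real) \<Rightarrow> ('a \<Rightarrow> real) \<Rightarrow> 'a \<Rightarrow> real" where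
  "inflow V w p i = (\<Sum>x\<in>V. w x i * p x / deg V w x)"

lemma ppr_invariant_iff_inflow:
  assumes "wgraph V w"
  shows "ppr_invariant V w \<alpha> s p r \<longleftrightarrow>
    (\<forall>i\<in>V. p i + \<alpha> * r i = (1 - \<alpha>) * inflow V w p i + \<alpha> * (if i = s then 1 else 0))"
proof -
  have "(\<Sum>x\<in>in_nei V w i. w x i * p x / deg V w x) = inflow V w p i" for i
    unfolding inflow_def
  proof (rule sum.mono_neutral_left)
    show "finite V" using assms by (simp add: wgraph_def)
    show "in_nei V w i \<subseteq> V" by (auto simp: in_nei_def)
    show "\<forall>x\<in>V - in_nei V w i. w x i * p x / deg V w x = 0"
      using assms by (auto simp: in_nei_def wgraph_def intro: antisym)
  qed
  then show ?thesis by (simp add: ppr_invariant_def)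
qed

lemma inflow_update:
  assumes "finite V" "x \<in> V"
  shows "inflow V w (p(x := p x + \<delta>)) i = inflow V w p i + w x i * \<delta> / deg V w x"
proof -
  have "w y i * (p(x := p x + \<delta>)) y / deg V w y
      = w y i * p y / deg V w y + (if y = x then w x i * \<delta> / deg V w x else 0)" for y
    by (simp add: distrib_left add_divide_distrib)
  then show ?thesis
    using assms by (simp add: inflow_def sum.distrib)
qed

lemma wgraph_event_w:
  assumes "wgraph V w" "event_ok V w u v dw"
  shows "wgraph V (event_w w u v dw)"
  using assms by (auto simp: wgraph_def event_w_def event_ok_def)

lemma deg_event_w:
  assumes "finite V" "v \<in> V"
  shows "deg V (event_w w u v dw) x = deg V w x + (if x = u then dw else 0)"
proof -
  have "(\<Sum>y\<in>V. event_w w u v dw x y) = (\<Sum>y\<in>V. w x y + (if x = u \<and> y = v then dw else 0))"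
    by (rule sum.cong) (auto simp: event_w_def)
  then show ?thesis
    using assms by (simp add: deg_def sum.distrib)
qed

lemma event_p_div_deg:
  assumes "finite V" "event_ok V w u v dw"
  shows "event_p V w p u dw x / deg V (event_w w u v dw) x = p x / deg V w x"
  using assms by (simp add: deg_event_w event_ok_def event_p_def)

lemma inflow_event:
  assumes "finite V" "event_ok V w u v dw"
  shows "inflow V (event_w w u v dw) (event_p V w p u dw) i
    = inflow V w p i + (if i = v then dw * p u / deg V w u else 0)"
proof -
  have "event_w w u v dw x i * event_p V w p u dw x / deg V (event_w w u v dw) x
      = w x i * p x / deg V w x + (if x = u \<and> i = v then dw * p u / deg V w u else 0)" for x
    using event_p_div_deg[OF assms, of p x]
    by (simp add: event_w_def distrib_right add_divide_distrib flip: times_divide_eq_right)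
  then show ?thesis
    using assms by (simp add: inflow_def sum.distrib event_ok_def)
qed

lemma ppr_invariant_event:
  assumes G: "wgraph V w" and ok: "event_ok V w u v dw" and \<alpha>: "0 < \<alpha>"
    and inv: "ppr_invariant V w \<alpha> s p r"
  shows "ppr_invariant V (event_w w u v dw) \<alpha> s (event_p V w p u dw) (event_r V w \<alpha> p r u v dw)"
  unfolding ppr_invariant_iff_inflow[OF wgraph_event_w[OF G ok]]
proof
  fix i assume "i \<in> V"
  define c where "c = dw * p u / deg V w u"
  have d: "deg V w u \<noteq> 0" using ok by (simp add: event_ok_def)
  have "event_p V w p u dw i = p i + (if i = u then c else 0)"
    using d by (simp add: event_p_def c_def field_simps)
  moreover have "\<alpha> * event_r V w \<alpha> p r u v dw i
      = \<alpha> * r i - (if i = u then c else 0) + (if i = v then (1 - \<alpha>) * c else 0)"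
    using \<alpha> d by (simp add: event_r_def c_def field_simps)
  moreover have "inflow V (event_w w u v dw) (event_p V w p u dw) i
      = inflow V w p i + (if i = v then c else 0)"
    using G ok by (simp add: inflow_event wgraph_def c_def)
  moreover have "p i + \<alpha> * r i = (1 - \<alpha>) * inflow V w p i + \<alpha> * (if i = s then 1 else 0)"
    using inv G \<open>i \<in> V\<close> by (simp add: ppr_invariant_iff_inflow)
  ultimately show "event_p V w p u dw i + \<alpha> * event_r V w \<alpha> p r u v dw i
      = (1 - \<alpha>) * inflow V (event_w w u v dw) (event_p V w p u dw) i + \<alpha> * (if i = s then 1 else 0)"
    by (simp add: algebra_simps split: if_splits)
qed

lemma ppr_invariant_push:
  assumes G: "wgraph V w" and "x \<in> V"
    and inv: "ppr_invariant V w \<alpha> s p r" and push: "push V w \<alpha> (p, r) x = (p', r')"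
  shows "ppr_invariant V w \<alpha> s p' r'"
  unfolding ppr_invariant_iff_inflow[OF G]
proof
  fix i assume "i \<in> V"
  define m where "m = r x * w x i / deg V w x"
  have p': "p' = p(x := p x + \<alpha> * r x)"
    and r': "r' i = (if i = x then 0 else r i) + (1 - \<alpha>) * m"
    using push by (auto simp: push_def m_def)
  have "inflow V w p' i = inflow V w p i + \<alpha> * m"
    using G \<open>x \<in> V\<close> by (simp add: p' inflow_update wgraph_def m_def)
  moreover have "p' i = p i + (if i = x then \<alpha> * r x else 0)"
    by (simp add: p')
  moreover have "p i + \<alpha> * r i = (1 - \<alpha>) * inflow V w p i + \<alpha> * (if i = s then 1 else 0)"
    using inv G \<open>i \<in> V\<close> by (simp add: ppr_invariant_iff_inflow)
  ultimately show "p' i + \<alpha> * r' i = (1 - \<alpha>) * inflow V w p' i + \<alpha> * (if i = s then 1 else 0)"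
    by (simp add: r' algebra_simps split: if_splits)
qed

lemma ppr_invariant_push_steps:
  assumes G: "wgraph V w"
    and "(push_step V w \<alpha> \<epsilon>)\<^sup>*\<^sup>* (p, r) (p', r')" and "ppr_invariant V w \<alpha> s p r"
  shows "ppr_invariant V w \<alpha> s p' r'"
  using assms(2,3)
proof (induction "(p', r')" arbitrary: p' r' rule: rtranclp_induct)
  case (step qr)
  then obtain x where "x \<in> V" and "(p', r') = push V w \<alpha> qr x"
    by (auto simp: push_step_def)
  then show ?case
    using step ppr_invariant_push[OF G, of x \<alpha> s "fst qr" "snd qr" p' r'] by simp
qed simp

lemma ppr_invariant_run_events:
  assumes "0 < \<alpha>"
    and "events_ok V \<alpha> (w, p, r) es" and "run_events V \<alpha> (w, p, r) es = (w', p', r')"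
    and "wgraph V w" and "ppr_invariant V w \<alpha> s p r"
  shows "wgraph V w' \<and> ppr_invariant V w' \<alpha> s p' r'"
  using assms(2-)
proof (induction es arbitrary: w p r)
  case Nil
  then show ?case by (simp add: run_events_def)
next
  case (Cons e es)
  obtain u v dw where e: "e = (u, v, dw)" by (cases e)
  with Cons.prems have ok: "event_ok V w u v dw" by simp
  show ?case
  proof (rule Cons.IH)
    show "events_ok V \<alpha> (event_w w u v dw, event_p V w p u dw, event_r V w \<alpha> p r u v dw) es"
      "run_events V \<alpha> (event_w w u v dw, event_p V w p u dw, event_r V w \<alpha> p r u v dw) es = (w', p', r')"
      using Cons.prems e by (simp_all add: apply_event_def run_events_def)
    show "wgraph V (event_w w u v dw)"
      using Cons.prems(3) ok by (rule wgraph_event_w)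
    show "ppr_invariant V (event_w w u v dw) \<alpha> s (event_p V w p u dw) (event_r V w \<alpha> p r u v dw)"
      using Cons.prems(3) ok assms(1) Cons.prems(4) by (rule ppr_invariant_event)
  qed
qed

theorem theorem1:
  fixes V :: "'a set" and w :: "'a \<Rightarrow> 'a \<Rightarrow> real" and \<alpha> \<epsilon> :: real and s :: 'a
    and p r :: "'a \<Rightarrow> real"
  assumes G: "wgraph V w"
    and \<alpha>: "0 < \<alpha>" "\<alpha> < 1" and \<epsilon>: "0 < \<epsilon>" and s: "s \<in> V"
    and inv: "ppr_invariant V w \<alpha> s p r"
  shows
    "(\<forall>u v dw. event_ok V w u v dw \<longrightarrow>
        ppr_invariant V (event_w w u v dw) \<alpha> s (event_p V w p u dw) (event_r V w \<alpha> p r u v dw))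
     \<and>
     (\<forall>es w' p' r' pf rf. events_ok V \<alpha> (w, p, r) es
        \<and> run_events V \<alpha> (w, p, r) es = (w', p', r')
        \<and> (push_step V w' \<alpha> \<epsilon>)\<^sup>*\<^sup>* (p', r') (pf, rf) \<longrightarrow>
          wgraph V w' \<and> ppr_invariant V w' \<alpha> s pf rf
          \<and> (push_terminated V w' \<epsilon> rf \<longrightarrow> (\<forall>i\<in>V. \<bar>rf i\<bar> \<le> \<epsilon> * deg V w' i)))"
proof (intro conjI allI impI)
  fix u v dw assume "event_ok V w u v dw"
  then show "ppr_invariant V (event_w w u v dw) \<alpha> s (event_p V w p u dw) (event_r V w \<alpha> p r u v dw)"
    using G \<alpha>(1) inv by (simp add: ppr_invariant_event)
next
  fix es w' p' r' pf rf
  assume run: "events_ok V \<alpha> (w, p, r) es \<and> run_events V \<alpha> (w, p, r) es = (w', p', r')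
        \<and> (push_step V w' \<alpha> \<epsilon>)\<^sup>*\<^sup>* (p', r') (pf, rf)"
  then have G': "wgraph V w'" and "ppr_invariant V w' \<alpha> s p' r'"
    using ppr_invariant_run_events[OF \<alpha>(1) _ _ G inv] by blast+
  then show "wgraph V w'" and "ppr_invariant V w' \<alpha> s pf rf"
    using run ppr_invariant_push_steps[OF G'] by blast+
  show "push_terminated V w' \<epsilon> rf \<Longrightarrow> \<forall>i\<in>V. \<bar>rf i\<bar> \<le> \<epsilon> * deg V w' i"
    by (auto simp: push_terminated_def not_less)
qed

end
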